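(* Let $P$ be an optimal planning problem that has a feasible solution and whose optimal cost $C^*$ is attained. Let $A$ be a probabilistically complete randomized feasible planner which is well-behaved and exponentially convergent. Let AO-$A$ denote the procedure that runs $A$ on $P_\infty$ to obtain $y_0$, sets $c_0=C(y_0)$, and then for $i=1,2,\dots$ indefinitely runs $A$ on $P_{c_{i-1}}$ to obtain $y_i$ and sets $c_i=C(y_i)$. For $t\ge 0$ let $c(t)$ be the cost of the best path found by AO-$A$ within total running time $t$. Then AO-$A$ is asymptotically optimal in total running time: for every $\epsilon>0$, $\Pr\big(c(t)-C^*\ge\epsilon\big)\to0$ as $t\to\infty$, and hence (as $c(t)$ is nonincreasing) $c(t)\to C^*$ with probability 1.
   Context: A feasible kinodynamic planning problem asks for $S\ge0$, $y:[0,S]\to X$, $u:[0,S]\to U$ with $y(0)=x_I$, $y(S)\in G$, $y(s)\in F$, $u(s)\in B(y(s))$, $y'(s)=D(y(s),u(s))$ for all $s$. An optimal planning problem $P$ also specifies an incremental cost $L$ and terminal cost $\Phi$ and minimizes $C(y)=\int_0^S L(y(s),u(s))ds+\Phi(y(S))$ over feasible solutions, with minimum $C^*$. For $\bar c\in\mathbb{R}\cup\{\infty\}$, $P_{\bar c}$ is the feasible kinodynamic problem in state-cost space (augmented state $(x,c)$, start $(x_I,0)$, dynamics $x'=D(x,u)$, $c'=L(x,u)$, goal $G_{\bar c}=\{(x,c):x\in G,\ c+\Phi(x)\le\bar c\}$) whose solutions are exactly the feasible trajectories of $P$ with $C(y)\le\bar c$. A planner is probabilistically complete if, when a solution exists,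 the probability that it has found one tends to 1 as planning time grows. $A$ is well-behaved if (1) whenever a feasible solution exists and $\bar c>C^*$, $A$ on $P_{\bar c}$ terminates in finite time, and (2) there is $w>0$ such that for every cost bound $\bar c$ the returned solution satisfies $E[C(y)-C^*\mid\bar c]\le(1-w)(\bar c-C^* )$. $A$ is exponentially convergent if, writing $f_{\bar c}(t)$ for the probability that $A$ run on $P_{\bar c}$ has not found a solution after time $t$, for every $\epsilon>0$ there are constants $\alpha_\epsilon,\beta_\epsilon>0$ with $f_{\bar c}(t)\le\min(1,\alpha_\epsilon e^{-\beta_\epsilon t})$ for all $t\ge0$ and all $\bar c\ge C^*+\epsilon$. *)

theory Defs
  imports "HOL-Probability.Probability"
begin

record ('x, 'u) kdp =
  st_space   :: "'x set"
  ctrl_space :: "'u set"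
  x_init     :: 'x
  goal_set   :: "'x set"
  free_set   :: "'x set"
  adm_ctrl   :: "'x \<Rightarrow> 'u set"
  dyn        :: "'x \<Rightarrow> 'u \<Rightarrow> 'x"
  inc_cost   :: "'x \<Rightarrow> 'u \<Rightarrow> real"
  term_cost  :: "'x \<Rightarrow> real"

text \<open>A trajectory (S, y, u): duration S, state path y, control path u.\<close>
type_synonym ('x, 'u) traj = "real \<times> (real \<Rightarrow> 'x) \<times> (real \<Rightarrow> 'u)"

definition feasible :: "('x::real_normed_vector, 'u) kdp \<Rightarrow> ('x, 'u) traj \<Rightarrow> bool" where
  "feasible P \<tau> = (case \<tau> of (S, y, u) \<Rightarrow>
     S \<ge> 0 \<and> y 0 = x_init P \<and> y S \<in> goal_set P \<and>
     (\<forall>s\<in>{0..S}. y s \<in> st_space P \<and> y s \<in> free_set P \<and>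
        u s \<in> ctrl_space P \<and> u s \<in> adm_ctrl P (y s) \<and>
        (y has_vector_derivative dyn P (y s) (u s)) (at s within {0..S})))"

definition cost :: "('x::real_normed_vector, 'u) kdp \<Rightarrow> ('x, 'u) traj \<Rightarrow> real" where
  "cost P \<tau> = (case \<tau> of (S, y, u) \<Rightarrow>
     integral {0..S} (\<lambda>s. inc_cost P (y s) (u s)) + term_cost P (y S))"

definition optimal_cost :: "('x::real_normed_vector, 'u) kdp \<Rightarrow> real" where
  "optimal_cost P = Inf (cost P ` {\<tau>. feasible P \<tau>})"

definition optimum_attained :: "('x::real_normed_vector, 'u) kdp \<Rightarrow> bool" where
  "optimum_attained P \<longleftrightarrow>
     (\<exists>\<tau>. feasible P \<tau> \<and> (\<forall>\<tau>'. feasible P \<tau>' \<longrightarrow> cost P \<tau> \<le> cost P \<tau>'))"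

definition solves_bounded :: "('x::real_normed_vector, 'u) kdp \<Rightarrow> ereal \<Rightarrow> ('x, 'u) traj \<Rightarrow> bool" where
  "solves_bounded P cbar \<tau> \<longleftrightarrow> feasible P \<tau> \<and> ereal (cost P \<tau>) \<le> cbar"

text \<open>A randomized planner A is modelled by a probability space \<Omega> of random seeds
  and a function run: given the cost bound cbar (i.e. the problem P_cbar) and a seed w,
  run cbar w = (T, y) where T \<in> [0,\<infinity>] is the running time (\<infinity> = never terminates)
  and y is the returned trajectory (meaningful only if T < \<infinity>).\<close>

definition found_by :: "('x::real_normed_vector, 'u) kdp \<Rightarrow> (ereal \<Rightarrow> 'w \<Rightarrow> ennreal \<times> ('x, 'u) traj)
    \<Rightarrow> ereal \<Rightarrow> real \<Rightarrow> 'w \<Rightarrow> bool" where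
  "found_by P run cbar t w \<longleftrightarrow> fst (run cbar w) \<le> ennreal t \<and> solves_bounded P cbar (snd (run cbar w))"

definition not_found_prob :: "('x::real_normed_vector, 'u) kdp \<Rightarrow> 'w measure
    \<Rightarrow> (ereal \<Rightarrow> 'w \<Rightarrow> ennreal \<times> ('x, 'u) traj) \<Rightarrow> ereal \<Rightarrow> real \<Rightarrow> real" where
  "not_found_prob P \<Omega> run cbar t = measure \<Omega> {w \<in> space \<Omega>. \<not> found_by P run cbar t w}"

definition randomized_feasible_planner :: "('x::real_normed_vector, 'u) kdp \<Rightarrow> 'w measure
    \<Rightarrow> (ereal \<Rightarrow> 'w \<Rightarrow> ennreal \<times> ('x, 'u) traj) \<Rightarrow> bool" where
  "randomized_feasible_planner P \<Omega> run \<longleftrightarrow>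
     prob_space \<Omega> \<and>
     (\<lambda>p. fst (run (fst p) (snd p))) \<in> borel_measurable (borel \<Otimes>\<^sub>M \<Omega>) \<and>
     (\<lambda>p. cost P (snd (run (fst p) (snd p)))) \<in> borel_measurable (borel \<Otimes>\<^sub>M \<Omega>) \<and>
     (\<forall>cbar. AE w in \<Omega>. fst (run cbar w) < \<infinity> \<longrightarrow> solves_bounded P cbar (snd (run cbar w)))"

definition prob_complete :: "('x::real_normed_vector, 'u) kdp \<Rightarrow> 'w measure
    \<Rightarrow> (ereal \<Rightarrow> 'w \<Rightarrow> ennreal \<times> ('x, 'u) traj) \<Rightarrow> bool" where
  "prob_complete P \<Omega> run \<longleftrightarrow>
     (\<forall>cbar. (\<exists>\<tau>. solves_bounded P cbar \<tau>) \<longrightarrow>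
        ((\<lambda>t. measure \<Omega> {w \<in> space \<Omega>. found_by P run cbar t w}) \<longlongrightarrow> 1) at_top)"

definition well_behaved :: "('x::real_normed_vector, 'u) kdp \<Rightarrow> 'w measure
    \<Rightarrow> (ereal \<Rightarrow> 'w \<Rightarrow> ennreal \<times> ('x, 'u) traj) \<Rightarrow> bool" where
  "well_behaved P \<Omega> run \<longleftrightarrow>
     (\<forall>cbar. (\<exists>\<tau>. feasible P \<tau>) \<and> ereal (optimal_cost P) < cbar \<longrightarrow>
        (AE w in \<Omega>. fst (run cbar w) < \<infinity>)) \<and>
     (\<exists>wt>0. \<forall>c::real. optimal_cost P < c \<longrightarrow>
        (\<integral>\<^sup>+ v. ennreal (cost P (snd (run (ereal c) v)) - optimal_cost P) \<partial>\<Omega>)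
          \<le> ennreal ((1 - wt) * (c - optimal_cost P)))"

definition exp_convergent :: "('x::real_normed_vector, 'u) kdp \<Rightarrow> 'w measure
    \<Rightarrow> (ereal \<Rightarrow> 'w \<Rightarrow> ennreal \<times> ('x, 'u) traj) \<Rightarrow> bool" where
  "exp_convergent P \<Omega> run \<longleftrightarrow>
     (\<forall>\<epsilon>>0. \<exists>\<alpha>>0. \<exists>\<beta>>0. \<forall>cbar. ereal (optimal_cost P + \<epsilon>) \<le> cbar \<longrightarrow>
        (\<forall>t\<ge>0. not_found_prob P \<Omega> run cbar t \<le> min 1 (\<alpha> * exp (- \<beta> * t))))"

text \<open>Each run i of AO-A uses a fresh independent seed \<omega> i.  The bound for run 0 is \<infinity>;
  the bound for run i+1 is the cost c_i of the path y_i returned by run i.\<close>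
primrec ao_bound :: "('x::real_normed_vector, 'u) kdp \<Rightarrow> (ereal \<Rightarrow> 'w \<Rightarrow> ennreal \<times> ('x, 'u) traj)
    \<Rightarrow> nat \<Rightarrow> (nat \<Rightarrow> 'w) \<Rightarrow> ereal" where
  "ao_bound P run 0 \<omega> = \<infinity>"
| "ao_bound P run (Suc i) \<omega> = ereal (cost P (snd (run (ao_bound P run i \<omega>) (\<omega> i))))"

definition ao_finish :: "('x::real_normed_vector, 'u) kdp \<Rightarrow> (ereal \<Rightarrow> 'w \<Rightarrow> ennreal \<times> ('x, 'u) traj)
    \<Rightarrow> nat \<Rightarrow> (nat \<Rightarrow> 'w) \<Rightarrow> ennreal" where
  "ao_finish P run i \<omega> = (\<Sum>j\<le>i. fst (run (ao_bound P run j \<omega>) (\<omega> j)))"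

text \<open>c(t): cost of the best path found by AO-A within total running time t (\<infinity> if none).\<close>
definition ao_best :: "('x::real_normed_vector, 'u) kdp \<Rightarrow> (ereal \<Rightarrow> 'w \<Rightarrow> ennreal \<times> ('x, 'u) traj)
    \<Rightarrow> real \<Rightarrow> (nat \<Rightarrow> 'w) \<Rightarrow> ereal" where
  "ao_best P run t \<omega> = Inf {ereal (cost P (snd (run (ao_bound P run i \<omega>) (\<omega> i)))) | i.
                            ao_finish P run i \<omega> \<le> ennreal t}"

end

theory Submission
  imports Defs
begin

text \<open>By well-behavedness the expected gap between the returned cost and C* shrinks by the
  factor 1 - w from one run to the next, so by Markov's inequality the probability that the first
  n costs all stay at least C* + \<epsilon> decays geometrically in n (the first cost, returned by an
  unbounded run, is handled by truncation). By exponential convergence, a run whose bound is at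
  least C* + \<epsilon> takes longer than t / (n + 1) with probability at most
  \<alpha> exp (- \<beta> t / (n + 1)). If c(t) \<ge> C* + \<epsilon>, then either the first n + 1 costs are all at
  least C* + \<epsilon>, or one of these runs was that slow; choosing n and then t large makes both
  probabilities small. Each run draws a fresh seed, independent of the bound it is given, which is
  what lets the per-run estimates be chained. Almost sure convergence follows because c(t) is
  nonincreasing and almost surely never below C*.\<close>

lemma emeasure_PiM_nat_split_first:
  assumes "prob_space M" and A: "A \<in> sets (PiM UNIV (\<lambda>_::nat. M))"
  shows "emeasure (PiM UNIV (\<lambda>_::nat. M)) A =
    (\<integral>\<^sup>+ s. emeasure (PiM UNIV (\<lambda>_::nat. M))
              {\<omega> \<in> space (PiM UNIV (\<lambda>_::nat. M)). case_nat s \<omega> \<in> A} \<partial>M)"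
proof -
  interpret prob_space M by fact
  interpret S: sequence_space M ..
  interpret P: pair_sigma_finite M S.S ..
  let ?f = "\<lambda>(s, \<omega>). case_nat s \<omega> :: nat \<Rightarrow> 'a"
  have f: "?f \<in> measurable (M \<Otimes>\<^sub>M S.S) S.S" by measurable
  have "emeasure S.S A = emeasure (distr (M \<Otimes>\<^sub>M S.S) S.S ?f) A" by (simp add: S.PiM_iter)
  also have "\<dots> = emeasure (M \<Otimes>\<^sub>M S.S) (?f -` A \<inter> space (M \<Otimes>\<^sub>M S.S))"
    by (rule emeasure_distr[OF f A])
  also have "\<dots> = (\<integral>\<^sup>+ s. emeasure S.S (Pair s -` (?f -` A \<inter> space (M \<Otimes>\<^sub>M S.S))) \<partial>M)"
    by (rule S.emeasure_pair_measure_alt) (use f A in measurable)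
  also have "\<dots> = (\<integral>\<^sup>+ s. emeasure S.S {\<omega> \<in> space S.S. case_nat s \<omega> \<in> A} \<partial>M)"
    by (intro nn_integral_cong arg_cong2[where f=emeasure] refl) (auto simp: space_pair_measure)
  finally show ?thesis .
qed

lemma (in finite_measure) tendsto_measure_greater_nat:
  assumes [measurable]: "f \<in> borel_measurable M"
  shows "(\<lambda>m::nat. measure M {x \<in> space M. real m < f x}) \<longlonglongrightarrow> 0"
proof -
  have "(\<lambda>m. measure M {x \<in> space M. real m < f x}) \<longlonglongrightarrow> measure M (\<Inter>m. {x \<in> space M. real m < f x})"
    by (rule finite_Lim_measure_decseq) (auto simp: decseq_def)
  moreover have "\<not> (\<forall>m::nat. real m < y)" for y :: real
    using reals_Archimedean2[of y] less_asym by blast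
  then have "(\<Inter>m. {x \<in> space M. real m < f x}) = {}" by auto
  ultimately show ?thesis by simp
qed

lemma Inf_setcompr_eq_INF_if:
  "Inf {f i | i. Q i} = (INF i. if Q i then f i else (top::'a::complete_lattice))"
proof (rule antisym)
  show "Inf {f i | i. Q i} \<le> (INF i. if Q i then f i else top)"
    by (rule INF_greatest) (auto intro: Inf_lower)
  show "(INF i. if Q i then f i else top) \<le> Inf {f i | i. Q i}"
  proof (rule Inf_greatest)
    fix x assume "x \<in> {f i | i. Q i}"
    then obtain i where "Q i" "x = f i" by auto
    then show "(INF i. if Q i then f i else top) \<le> x"
      by (intro INF_lower2[of i]) auto
  qed
qed

lemma tendsto_mult_exp_decay_at_top:
  fixes N \<alpha> \<beta> :: real
  assumes "0 < N" "0 < \<beta>"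
  shows "((\<lambda>t. N * (\<alpha> * exp (- \<beta> * (t / N)))) \<longlongrightarrow> 0) at_top"
proof -
  have "LIM t at_top. (\<beta> / N) * t :> at_top"
    using assms by (intro filterlim_tendsto_pos_mult_at_top[OF tendsto_const] filterlim_ident) auto
  then have "LIM t at_top. - ((\<beta> / N) * t) :> at_bot"
    by (simp add: filterlim_uminus_at_bot)
  then have "((\<lambda>t. N * (\<alpha> * exp (- ((\<beta> / N) * t)))) \<longlongrightarrow> 0) at_top"
    by (intro tendsto_mult_right_zero filterlim_compose[OF exp_at_bot])
  then show ?thesis by (simp add: field_simps)
qed

lemma optimum_attained_cost:
  assumes "optimum_attained P"
  obtains \<tau> where "feasible P \<tau>" "cost P \<tau> = optimal_cost P"
    "\<And>\<tau>'. feasible P \<tau>' \<Longrightarrow> cost P \<tau> \<le> cost P \<tau>'"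
proof -
  obtain \<tau> where \<tau>: "feasible P \<tau>" "\<And>\<tau>'. feasible P \<tau>' \<Longrightarrow> cost P \<tau> \<le> cost P \<tau>'"
    using assms unfolding optimum_attained_def by blast
  moreover from \<tau> have "cost P \<tau> = optimal_cost P"
    unfolding optimal_cost_def by (intro cInf_eq_minimum[symmetric]) auto
  ultimately show ?thesis using that by blast
qed

lemma optimal_cost_le_cost:
  assumes "optimum_attained P" and "feasible P \<tau>"
  shows "optimal_cost P \<le> cost P \<tau>"
  using optimum_attained_cost[OF assms(1)] assms(2) by metis

lemma ex_solves_bounded_if_optimal_cost_le:
  assumes "optimum_attained P" and "ereal (optimal_cost P) \<le> b"
  shows "\<exists>\<tau>. solves_bounded P b \<tau>"
proof -
  obtain \<tau> where "feasible P \<tau>" "cost P \<tau> = optimal_cost P"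
    using optimum_attained_cost[OF assms(1)] by blast
  with assms(2) show ?thesis by (intro exI[of _ \<tau>]) (simp add: solves_bounded_def)
qed

text \<open>Allowing an arbitrary initial bound makes the bound sequence shift-invariant: dropping the
  first seed restarts it from the first returned cost. All inductions over the seeds rest on this.\<close>

primrec ao_bound_from :: "('x::real_normed_vector, 'u) kdp \<Rightarrow> (ereal \<Rightarrow> 'w \<Rightarrow> ennreal \<times> ('x, 'u) traj)
    \<Rightarrow> ereal \<Rightarrow> nat \<Rightarrow> (nat \<Rightarrow> 'w) \<Rightarrow> ereal" where
  "ao_bound_from P run b 0 \<omega> = b"
| "ao_bound_from P run b (Suc i) \<omega> = ereal (cost P (snd (run (ao_bound_from P run b i \<omega>) (\<omega> i))))"

lemma ao_bound_from_Suc_shift: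
  "ao_bound_from P run b (Suc i) \<omega> =
    ao_bound_from P run (ereal (cost P (snd (run b (\<omega> 0))))) i (\<lambda>k. \<omega> (Suc k))"
  by (induction i) auto

lemma ao_bound_eq_ao_bound_from: "ao_bound P run i \<omega> = ao_bound_from P run \<infinity> i \<omega>"
  by (induction i) auto

lemma ao_finish_eq: "ao_finish P run i \<omega> = (\<Sum>j\<le>i. fst (run (ao_bound_from P run \<infinity> j \<omega>) (\<omega> j)))"
  by (simp add: ao_finish_def ao_bound_eq_ao_bound_from)

lemma ao_best_eq_INF:
  "ao_best P run t \<omega> =
    (INF i. if ao_finish P run i \<omega> \<le> ennreal t then ao_bound_from P run \<infinity> (Suc i) \<omega> else \<infinity>)"
  unfolding ao_best_def Inf_setcompr_eq_INF_if by (simp add: ao_bound_eq_ao_bound_from top_ereal_def)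

lemma ao_best_antimono: "t \<le> t' \<Longrightarrow> ao_best P run t' \<omega> \<le> ao_best P run t \<omega>"
  unfolding ao_best_def by (intro Inf_superset_mono) (blast intro: order_trans ennreal_leI)

lemma ao_best_le_cost: "ao_finish P run i \<omega> \<le> ennreal t \<Longrightarrow> ao_best P run t \<omega> \<le> ao_bound_from P run \<infinity> (Suc i) \<omega>"
  unfolding ao_best_eq_INF by (rule INF_lower2[of i]) auto

lemma ao_finish_le_of_fast_runs:
  assumes t: "0 \<le> t" and j: "j \<le> n"
    and fast: "\<forall>i\<le>j. fst (run (ao_bound_from P run \<infinity> i \<omega>) (\<omega> i)) \<le> ennreal (t / real (Suc n))"
  shows "ao_finish P run j \<omega> \<le> ennreal t"
proof -
  have "ao_finish P run j \<omega> \<le> (\<Sum>i\<le>j. ennreal (t / real (Suc n)))"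
    unfolding ao_finish_eq using fast by (intro sum_mono) auto
  also have "\<dots> = ennreal (real (Suc j)) * ennreal (t / real (Suc n))"
    by (simp only: sum_constant card_atMost ennreal_of_nat_eq_real_of_nat)
  also have "\<dots> = ennreal (real (Suc j) * (t / real (Suc n)))"
    by (rule ennreal_mult[symmetric]) (use t in auto)
  also have "\<dots> \<le> ennreal t"
  proof (rule ennreal_leI)
    have "real (Suc j) * (t / real (Suc n)) \<le> real (Suc n) * (t / real (Suc n))"
      using j t by (intro mult_right_mono) auto
    then show "real (Suc j) * (t / real (Suc n)) \<le> t" by simp
  qed
  finally show ?thesis .
qed

lemma ao_best_ge_of_costs_ge:
  assumes "\<And>i. fst (run (ao_bound_from P run \<infinity> i \<omega>) (\<omega> i)) < \<infinity> \<Longrightarrow>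
      C \<le> cost P (snd (run (ao_bound_from P run \<infinity> i \<omega>) (\<omega> i)))"
  shows "ereal C \<le> ao_best P run t \<omega>"
  unfolding ao_best_def
proof (rule Inf_greatest)
  fix x assume "x \<in> {ereal (cost P (snd (run (ao_bound P run i \<omega>) (\<omega> i)))) | i. ao_finish P run i \<omega> \<le> ennreal t}"
  then obtain i where x: "x = ereal (cost P (snd (run (ao_bound_from P run \<infinity> i \<omega>) (\<omega> i))))"
    and f: "ao_finish P run i \<omega> \<le> ennreal t" by (auto simp: ao_bound_eq_ao_bound_from)
  have "fst (run (ao_bound_from P run \<infinity> i \<omega>) (\<omega> i)) \<le> ao_finish P run i \<omega>"
    unfolding ao_finish_eq by (rule member_le_sum) auto
  also note f
  also have "ennreal t < \<infinity>" by simp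
  finally show "ereal C \<le> x" using assms x by simp
qed

lemma ao_best_tendsto_of_approx:
  assumes lower: "\<And>t. ereal C \<le> ao_best P run t \<omega>"
    and approx: "\<And>k::nat. \<exists>m::nat. ao_best P run (real m) \<omega> < ereal (C + 1 / real (Suc k))"
  shows "((\<lambda>t. ao_best P run t \<omega>) \<longlongrightarrow> ereal C) at_top"
proof (rule order_tendstoI)
  fix a assume "a < ereal C"
  then show "eventually (\<lambda>t. a < ao_best P run t \<omega>) at_top"
    by (intro always_eventually allI less_le_trans[OF _ lower])
next
  fix a assume a: "ereal C < a"
  obtain k where k: "ereal (C + 1 / real (Suc k)) < a"
  proof (cases a)
    case (real r)
    with a obtain k where "inverse (real (Suc k)) < r - C"
      using reals_Archimedean[of "r - C"] by auto
    with real that[of k] show ?thesis by (simp add: field_simps)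
  qed (use a that[of 0] in auto)
  obtain m where m: "ao_best P run (real m) \<omega> < ereal (C + 1 / real (Suc k))"
    using approx by blast
  show "eventually (\<lambda>t. ao_best P run t \<omega> < a) at_top"
    using eventually_ge_at_top[of "real m"]
  proof eventually_elim
    case (elim t)
    have "ao_best P run t \<omega> \<le> ao_best P run (real m) \<omega>" by (rule ao_best_antimono[OF elim])
    also note m
    also note k
    finally show ?case .
  qed
qed

locale measurable_planner =
  fixes P :: "('x::real_normed_vector, 'u) kdp" and \<Omega> :: "'w measure"
    and run :: "ereal \<Rightarrow> 'w \<Rightarrow> ennreal \<times> ('x, 'u) traj"
  assumes prob_space_seeds: "prob_space \<Omega>"
    and measurable_time: "(\<lambda>p. fst (run (fst p) (snd p))) \<in> borel_measurable (borel \<Otimes>\<^sub>M \<Omega>)"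
    and measurable_cost: "(\<lambda>p. cost P (snd (run (fst p) (snd p)))) \<in> borel_measurable (borel \<Otimes>\<^sub>M \<Omega>)"
begin

abbreviation Seeds :: "(nat \<Rightarrow> 'w) measure" where
  "Seeds \<equiv> PiM UNIV (\<lambda>_::nat. \<Omega>)"

lemma measurable_time_comp[measurable (raw)]:
  "f \<in> measurable M borel \<Longrightarrow> g \<in> measurable M \<Omega> \<Longrightarrow> (\<lambda>x. fst (run (f x) (g x))) \<in> borel_measurable M"
  using measurable_compose[OF measurable_Pair measurable_time] by simp

lemma measurable_cost_comp[measurable (raw)]:
  "f \<in> measurable M borel \<Longrightarrow> g \<in> measurable M \<Omega> \<Longrightarrow> (\<lambda>x. cost P (snd (run (f x) (g x)))) \<in> borel_measurable M"
  using measurable_compose[OF measurable_Pair measurable_cost] by simp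

lemma measurable_ao_bound_from[measurable]: "(\<lambda>\<omega>. ao_bound_from P run b j \<omega>) \<in> borel_measurable Seeds"
  by (induction j) auto

lemma measurable_ao_best[measurable]: "(\<lambda>\<omega>. ao_best P run t \<omega>) \<in> borel_measurable Seeds"
  unfolding ao_best_eq_INF ao_finish_eq by measurable

lemma prob_space_Seeds: "prob_space Seeds"
  by (rule prob_space_PiM) (simp add: prob_space_seeds)

lemma case_nat_in_space_Seeds: "s \<in> space \<Omega> \<Longrightarrow> \<omega> \<in> space Seeds \<Longrightarrow> case_nat s \<omega> \<in> space Seeds"
  by (simp add: space_PiM PiE_iff split: nat.splits)

text \<open>The bound used by run j depends only on the seeds of the earlier runs, so it is independent
  of the fresh seed of run j.\<close>

lemma emeasure_fresh_seed_event_le: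
  assumes g: "Measurable.pred (borel \<Otimes>\<^sub>M \<Omega>) (\<lambda>p. g (fst p) (snd p))"
    and le: "\<And>b. emeasure \<Omega> {w \<in> space \<Omega>. g b w} \<le> r"
  shows "emeasure Seeds {\<omega> \<in> space Seeds. g (ao_bound_from P run b j \<omega>) (\<omega> j)} \<le> r"
proof (induction j arbitrary: b)
  case 0
  have "{w \<in> space \<Omega>. g b w} \<in> sets \<Omega>"
    using measurable_compose[OF measurable_Pair[OF measurable_const measurable_ident_sets[OF refl]] g]
    by simp
  then have m: "{\<omega> \<in> space Seeds. g b (\<omega> 0)} \<in> sets Seeds" by measurable
  have "emeasure Seeds {\<omega> \<in> space Seeds. g b (\<omega> 0)}
      = (\<integral>\<^sup>+ s. emeasure Seeds {\<omega>' \<in> space Seeds. case_nat s \<omega>' \<in> {\<omega> \<in> space Seeds. g b (\<omega> 0)}} \<partial>\<Omega>)"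
    by (rule emeasure_PiM_nat_split_first[OF prob_space_seeds m])
  also have "\<dots> \<le> (\<integral>\<^sup>+ s. indicator {w \<in> space \<Omega>. g b w} s \<partial>\<Omega>)"
    using prob_space.emeasure_le_1[OF prob_space_Seeds]
    by (intro nn_integral_mono) (auto simp: indicator_def)
  also have "\<dots> \<le> r" using le[of b] \<open>{w \<in> space \<Omega>. g b w} \<in> sets \<Omega>\<close> by simp
  finally show ?case by simp
next
  case (Suc j)
  let ?c = "\<lambda>s. ereal (cost P (snd (run b s)))"
  let ?E = "{\<omega> \<in> space Seeds. g (ao_bound_from P run b (Suc j) \<omega>) (\<omega> (Suc j))}"
  have "(\<lambda>\<omega>. (ao_bound_from P run b (Suc j) \<omega>, \<omega> (Suc j))) \<in> measurable Seeds (borel \<Otimes>\<^sub>M \<Omega>)"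
    by measurable
  from measurable_compose[OF this g] have m: "?E \<in> sets Seeds" by simp
  have "emeasure Seeds ?E = (\<integral>\<^sup>+ s. emeasure Seeds {\<omega>' \<in> space Seeds. case_nat s \<omega>' \<in> ?E} \<partial>\<Omega>)"
    by (rule emeasure_PiM_nat_split_first[OF prob_space_seeds m])
  also have "\<dots> = (\<integral>\<^sup>+ s. emeasure Seeds {\<omega>' \<in> space Seeds. g (ao_bound_from P run (?c s) j \<omega>') (\<omega>' j)} \<partial>\<Omega>)"
    by (intro nn_integral_cong arg_cong2[where f=emeasure] refl Collect_cong)
      (auto simp: case_nat_in_space_Seeds ao_bound_from_Suc_shift[of _ _ _ j] simp del: ao_bound_from.simps)
  also have "\<dots> \<le> (\<integral>\<^sup>+ s. r \<partial>\<Omega>)"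
    by (rule nn_integral_mono) (rule Suc.IH)
  also have "\<dots> = r" using prob_space.emeasure_space_1[OF prob_space_seeds] by simp
  finally show ?case .
qed

definition costs_above :: "real \<Rightarrow> ereal \<Rightarrow> nat \<Rightarrow> (nat \<Rightarrow> 'w) set" where
  "costs_above d b n = {\<omega> \<in> space Seeds. \<forall>j<n. ereal d \<le> ao_bound_from P run b (Suc j) \<omega>}"

lemma sets_costs_above[measurable]: "costs_above d b n \<in> sets Seeds"
  unfolding costs_above_def by measurable

lemma costs_above_Suc_section:
  assumes s: "s \<in> space \<Omega>"
  shows "{\<omega> \<in> space Seeds. case_nat s \<omega> \<in> costs_above d b (Suc n)} =
    (if d \<le> cost P (snd (run b s)) then costs_above d (ereal (cost P (snd (run b s)))) n else {})"
proof -
  have "case_nat s \<omega> \<in> costs_above d b (Suc n) \<longleftrightarrow>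
      d \<le> cost P (snd (run b s)) \<and> \<omega> \<in> costs_above d (ereal (cost P (snd (run b s)))) n"
    if "\<omega> \<in> space Seeds" for \<omega>
    using that case_nat_in_space_Seeds[OF s that]
    by (auto simp: costs_above_def All_less_Suc2 ao_bound_from_Suc_shift[of _ _ _ "Suc _"]
        ao_bound_from.simps(2)[of _ _ _ 0]
        simp del: ao_bound_from.simps(2))
  then show ?thesis by (auto simp: costs_above_def)
qed

definition gap_contraction :: "real \<Rightarrow> real \<Rightarrow> bool" where
  "gap_contraction C q \<longleftrightarrow> (\<forall>c. C < c \<longrightarrow>
     (\<integral>\<^sup>+ v. ennreal (cost P (snd (run (ereal c) v)) - C) \<partial>\<Omega>) \<le> ennreal (q * (c - C)))"

lemma gap_contraction_if_well_behaved:
  assumes "well_behaved P \<Omega> run"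
  obtains q where "0 \<le> q" "q < 1" "gap_contraction (optimal_cost P) q"
proof -
  obtain w where "0 < w" and contr: "\<And>c. optimal_cost P < c \<Longrightarrow>
      (\<integral>\<^sup>+ v. ennreal (cost P (snd (run (ereal c) v)) - optimal_cost P) \<partial>\<Omega>)
        \<le> ennreal ((1 - w) * (c - optimal_cost P))"
    using assms unfolding well_behaved_def by blast
  have "(1 - w) * (c - optimal_cost P) \<le> max 0 (1 - w) * (c - optimal_cost P)" if "optimal_cost P < c" for c
    using that by (intro mult_right_mono) auto
  then have "gap_contraction (optimal_cost P) (max 0 (1 - w))"
    unfolding gap_contraction_def using contr by (meson ennreal_leI order_trans)
  with \<open>0 < w\<close> show ?thesis by (intro that[of "max 0 (1 - w)"]) auto
qed

text \<open>Markov's inequality for the last of the first n costs, combined with the contraction of the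
  expected gap to C along the runs.\<close>

lemma emeasure_costs_above_le:
  assumes q: "0 \<le> q" "gap_contraction C q" and d: "C < d"
  shows "d \<le> b \<Longrightarrow> emeasure Seeds (costs_above d (ereal b) n) \<le> ennreal (q ^ n * (b - C) / (d - C))"
proof (induction n arbitrary: b)
  case 0
  have "emeasure Seeds (costs_above d (ereal b) 0) \<le> 1"
    by (rule prob_space.emeasure_le_1[OF prob_space_Seeds])
  also have "1 \<le> ennreal (q ^ 0 * (b - C) / (d - C))"
    using 0 d by (simp add: field_simps ennreal_1[symmetric] del: ennreal_1)
  finally show ?case .
next
  case (Suc n)
  let ?c = "\<lambda>s. cost P (snd (run (ereal b) s))"
  have "emeasure Seeds (costs_above d (ereal b) (Suc n)) =
      (\<integral>\<^sup>+ s. emeasure Seeds {\<omega> \<in> space Seeds. case_nat s \<omega> \<in> costs_above d (ereal b) (Suc n)} \<partial>\<Omega>)"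
    by (rule emeasure_PiM_nat_split_first[OF prob_space_seeds sets_costs_above])
  also have "\<dots> \<le> (\<integral>\<^sup>+ s. ennreal (q ^ n / (d - C)) * ennreal (?c s - C) \<partial>\<Omega>)"
  proof (rule nn_integral_mono)
    fix s assume s: "s \<in> space \<Omega>"
    show "emeasure Seeds {\<omega> \<in> space Seeds. case_nat s \<omega> \<in> costs_above d (ereal b) (Suc n)}
        \<le> ennreal (q ^ n / (d - C)) * ennreal (?c s - C)"
    proof (cases "d \<le> ?c s")
      case True
      then have "emeasure Seeds {\<omega> \<in> space Seeds. case_nat s \<omega> \<in> costs_above d (ereal b) (Suc n)}
          \<le> ennreal (q ^ n * (?c s - C) / (d - C))"
        using Suc.IH by (simp add: costs_above_Suc_section[OF s])
      also have "\<dots> = ennreal (q ^ n / (d - C)) * ennreal (?c s - C)"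
        using True d q by (simp add: ennreal_mult[symmetric])
      finally show ?thesis .
    qed (simp add: costs_above_Suc_section[OF s])
  qed
  also have "\<dots> = ennreal (q ^ n / (d - C)) * (\<integral>\<^sup>+ s. ennreal (?c s - C) \<partial>\<Omega>)"
    by (rule nn_integral_cmult) measurable
  also have "\<dots> \<le> ennreal (q ^ n / (d - C)) * ennreal (q * (b - C))"
    using Suc.prems d q(2) by (intro mult_left_mono) (auto simp: gap_contraction_def)
  also have "\<dots> = ennreal (q ^ Suc n * (b - C) / (d - C))"
    using Suc.prems d q by (simp add: ennreal_mult[symmetric])
  finally show ?case .
qed

lemma measure_costs_above_infinity_le:
  assumes q: "0 \<le> q" "gap_contraction C q" and d: "C < d" and M: "C \<le> M"
  shows "measure Seeds (costs_above d \<infinity> (Suc n)) \<le>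
    measure \<Omega> {s \<in> space \<Omega>. M < cost P (snd (run \<infinity> s))} + q ^ n * (M - C) / (d - C)"
proof -
  interpret \<Omega>: prob_space \<Omega> by (rule prob_space_seeds)
  interpret Seeds: prob_space Seeds by (rule prob_space_Seeds)
  let ?c = "\<lambda>s. cost P (snd (run \<infinity> s))"
  let ?D = "{s \<in> space \<Omega>. M < ?c s}"
  let ?x = "q ^ n * (M - C) / (d - C)"
  have x: "0 \<le> ?x" using q d M by simp
  have "emeasure Seeds (costs_above d \<infinity> (Suc n)) =
      (\<integral>\<^sup>+ s. emeasure Seeds {\<omega> \<in> space Seeds. case_nat s \<omega> \<in> costs_above d \<infinity> (Suc n)} \<partial>\<Omega>)"
    by (rule emeasure_PiM_nat_split_first[OF prob_space_seeds sets_costs_above])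
  also have "\<dots> \<le> (\<integral>\<^sup>+ s. indicator ?D s + ennreal ?x \<partial>\<Omega>)"
  proof (rule nn_integral_mono)
    fix s assume s: "s \<in> space \<Omega>"
    show "emeasure Seeds {\<omega> \<in> space Seeds. case_nat s \<omega> \<in> costs_above d \<infinity> (Suc n)}
        \<le> indicator ?D s + ennreal ?x"
    proof (cases "d \<le> ?c s")
      case True
      show ?thesis
      proof (cases "M < ?c s")
        case True
        then show ?thesis using s Seeds.emeasure_le_1 by (simp add: indicator_def add_increasing2)
      next
        case False
        have "emeasure Seeds (costs_above d (ereal (?c s)) n) \<le> ennreal (q ^ n * (?c s - C) / (d - C))"
          by (rule emeasure_costs_above_le[OF q d True])
        also have "\<dots> \<le> ennreal ?x"
          using False d q by (intro ennreal_leI divide_right_mono mult_left_mono) auto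
        finally show ?thesis using True by (simp add: costs_above_Suc_section[OF s] add_increasing)
      qed
    qed (simp add: costs_above_Suc_section[OF s])
  qed
  also have "\<dots> = emeasure \<Omega> ?D + ennreal ?x"
    by (subst nn_integral_add) (auto simp: \<Omega>.emeasure_space_1)
  also have "\<dots> = ennreal (measure \<Omega> ?D + ?x)"
    using x by (simp add: \<Omega>.emeasure_eq_measure ennreal_plus)
  finally have "ennreal (measure Seeds (costs_above d \<infinity> (Suc n))) \<le> ennreal (measure \<Omega> ?D + ?x)"
    by (simp only: Seeds.emeasure_eq_measure)
  then show ?thesis
    by (rule ennreal_le_iff[THEN iffD1, rotated]) (use x in simp)
qed

lemma costs_above_infinity_small:
  assumes q: "0 \<le> q" "q < 1" "gap_contraction C q" and d: "C < d" and \<eta>: "0 < \<eta>"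
  shows "\<exists>n. measure Seeds (costs_above d \<infinity> (Suc n)) < \<eta>"
proof -
  interpret \<Omega>: prob_space \<Omega> by (rule prob_space_seeds)
  let ?D = "\<lambda>m::nat. {s \<in> space \<Omega>. real m < cost P (snd (run \<infinity> s))}"
  have "(\<lambda>m. measure \<Omega> (?D m)) \<longlonglongrightarrow> 0"
    by (rule \<Omega>.tendsto_measure_greater_nat) measurable
  then have "eventually (\<lambda>m. measure \<Omega> (?D m) < \<eta> / 2) sequentially"
    by (rule order_tendstoD(2)) (use \<eta> in simp)
  moreover have "eventually (\<lambda>m. C \<le> real m) sequentially"
    by (rule eventually_sequentiallyI[of "nat \<lceil>C\<rceil>"]) linarith
  ultimately have "eventually (\<lambda>m. measure \<Omega> (?D m) < \<eta> / 2 \<and> C \<le> real m) sequentially"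
    by (rule eventually_conj)
  then obtain m where m: "measure \<Omega> (?D m) < \<eta> / 2" "C \<le> real m"
    by (auto simp: eventually_sequentially)
  have "(\<lambda>n. q ^ n * ((real m - C) / (d - C))) \<longlonglongrightarrow> 0"
    using q by (intro tendsto_mult_left_zero LIMSEQ_power_zero) auto
  then have "eventually (\<lambda>n. q ^ n * ((real m - C) / (d - C)) < \<eta> / 2) sequentially"
    by (rule order_tendstoD(2)) (use \<eta> in simp)
  then obtain n where n: "q ^ n * ((real m - C) / (d - C)) < \<eta> / 2"
    by (auto simp: eventually_sequentially)
  have "measure Seeds (costs_above d \<infinity> (Suc n)) \<le> measure \<Omega> (?D m) + q ^ n * (real m - C) / (d - C)"
    by (rule measure_costs_above_infinity_le[OF q(1,3) d m(2)])
  moreover have "q ^ n * (real m - C) / (d - C) < \<eta> / 2" using n by simp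
  ultimately show ?thesis using m(1) by (intro exI[of _ n]) linarith
qed

text \<open>The event that A has found a solution need not be measurable (the measure of a
  non-measurable set is 0); probabilistic completeness gives it positive measure at large times,
  which makes it measurable.\<close>

lemma emeasure_time_greater_le:
  assumes "prob_complete P \<Omega> run" and "\<exists>\<tau>. solves_bounded P b \<tau>"
    and decay: "\<forall>t\<ge>0. not_found_prob P \<Omega> run b t \<le> min 1 (\<alpha> * exp (- \<beta> * t))"
    and s: "0 \<le> s"
  shows "emeasure \<Omega> {w \<in> space \<Omega>. ennreal s < fst (run b w)} \<le> ennreal (\<alpha> * exp (- \<beta> * s))"
proof -
  interpret \<Omega>: prob_space \<Omega> by (rule prob_space_seeds)
  let ?F = "\<lambda>t. {w \<in> space \<Omega>. found_by P run b t w}"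
  have "((\<lambda>t. measure \<Omega> (?F t)) \<longlongrightarrow> 1) at_top"
    using assms(1,2) unfolding prob_complete_def by blast
  then have "eventually (\<lambda>t. 0 < measure \<Omega> (?F t)) at_top"
    by (rule order_tendstoD(1)) simp
  then obtain t where t: "s \<le> t" "0 < measure \<Omega> (?F t)"
    by (auto simp: eventually_at_top_linorder intro: max.cobounded2 max.cobounded1)
  have "?F t \<in> sets \<Omega>"
    using t(2) measure_notin_sets[of "?F t" \<Omega>] by fastforce
  then have "?F t \<inter> {w \<in> space \<Omega>. fst (run b w) \<le> ennreal s} \<in> sets \<Omega>" by measurable
  also have "?F t \<inter> {w \<in> space \<Omega>. fst (run b w) \<le> ennreal s} = ?F s"
    using t(1) by (auto simp: found_by_def intro: order_trans ennreal_leI)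
  finally have "?F s \<in> sets \<Omega>" .
  then have "emeasure \<Omega> {w \<in> space \<Omega>. ennreal s < fst (run b w)} \<le> emeasure \<Omega> (space \<Omega> - ?F s)"
    by (intro emeasure_mono) (auto simp: found_by_def not_le)
  also have "\<dots> = ennreal (not_found_prob P \<Omega> run b s)"
    unfolding not_found_prob_def \<Omega>.emeasure_eq_measure
    by (intro arg_cong[where f=ennreal] arg_cong[where f="measure \<Omega>"]) auto
  also have "\<dots> \<le> ennreal (\<alpha> * exp (- \<beta> * s))"
    using decay s by (intro ennreal_leI) auto
  finally show ?thesis .
qed

definition slow_run :: "real \<Rightarrow> real \<Rightarrow> nat \<Rightarrow> (nat \<Rightarrow> 'w) set" where
  "slow_run d s j = {\<omega> \<in> space Seeds. ereal d \<le> ao_bound_from P run \<infinity> j \<omega> \<and>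
     ennreal s < fst (run (ao_bound_from P run \<infinity> j \<omega>) (\<omega> j))}"

lemma sets_slow_run[measurable]: "slow_run d s j \<in> sets Seeds"
  unfolding slow_run_def by measurable

lemma measure_slow_run_le:
  assumes "prob_complete P \<Omega> run" and "\<And>b. ereal d \<le> b \<Longrightarrow> \<exists>\<tau>. solves_bounded P b \<tau>"
    and "\<And>b. ereal d \<le> b \<Longrightarrow> \<forall>t\<ge>0. not_found_prob P \<Omega> run b t \<le> min 1 (\<alpha> * exp (- \<beta> * t))"
    and "0 \<le> s" "0 \<le> \<alpha>"
  shows "measure Seeds (slow_run d s j) \<le> \<alpha> * exp (- \<beta> * s)"
proof -
  interpret Seeds: prob_space Seeds by (rule prob_space_Seeds)
  have "emeasure Seeds (slow_run d s j) \<le> ennreal (\<alpha> * exp (- \<beta> * s))"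
    unfolding slow_run_def
  proof (rule emeasure_fresh_seed_event_le[where g = "\<lambda>b w. ereal d \<le> b \<and> ennreal s < fst (run b w)"])
    show "Measurable.pred (borel \<Otimes>\<^sub>M \<Omega>) (\<lambda>p. ereal d \<le> fst p \<and> ennreal s < fst (run (fst p) (snd p)))"
      by measurable
    show "emeasure \<Omega> {w \<in> space \<Omega>. ereal d \<le> b \<and> ennreal s < fst (run b w)} \<le> ennreal (\<alpha> * exp (- \<beta> * s))"
      for b using emeasure_time_greater_le[OF assms(1,2,3) \<open>0 \<le> s\<close>, of b] by (cases "ereal d \<le> b") simp_all
  qed
  then show ?thesis using assms(5) by (simp add: Seeds.emeasure_eq_measure)
qed

lemma AE_terminated_cost_ge:
  assumes "\<And>b. AE w in \<Omega>. fst (run b w) < \<infinity> \<longrightarrow> solves_bounded P b (snd (run b w))"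
    and lower: "\<And>\<tau>. feasible P \<tau> \<Longrightarrow> C \<le> cost P \<tau>"
  shows "AE \<omega> in Seeds. fst (run (ao_bound_from P run b j \<omega>) (\<omega> j)) < \<infinity> \<longrightarrow>
            C \<le> cost P (snd (run (ao_bound_from P run b j \<omega>) (\<omega> j)))"
proof -
  let ?g = "\<lambda>b w. fst (run b w) < \<infinity> \<and> cost P (snd (run b w)) < C"
  have null: "emeasure \<Omega> {w \<in> space \<Omega>. ?g b w} = 0" for b
  proof -
    have "AE w in \<Omega>. \<not> ?g b w"
      using assms(1)[of b] by eventually_elim (auto simp: solves_bounded_def dest!: lower)
    then show ?thesis by (subst (asm) AE_iff_measurable[OF _ refl]) measurable
  qed
  have "emeasure Seeds {\<omega> \<in> space Seeds. ?g (ao_bound_from P run b j \<omega>) (\<omega> j)} \<le> 0"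
    by (rule emeasure_fresh_seed_event_le) (measurable, rule null[THEN eq_refl])
  then show ?thesis
    by (subst AE_iff_measurable[OF _ refl]) (measurable, auto simp: not_le)
qed

text \<open>If the first n + 1 runs each took at most t / (n + 1), all of them finished by time t, so a
  best cost at least d after time t forces all their costs to be at least d.\<close>

lemma best_above_subset:
  assumes t: "0 \<le> t"
  shows "{\<omega> \<in> space Seeds. ereal d \<le> ao_best P run t \<omega>}
    \<subseteq> costs_above d \<infinity> (Suc n) \<union> (\<Union>j\<le>n. slow_run d (t / real (Suc n)) j)"
proof
  fix \<omega> assume \<omega>: "\<omega> \<in> {\<omega> \<in> space Seeds. ereal d \<le> ao_best P run t \<omega>}"
  let ?time = "\<lambda>i. fst (run (ao_bound_from P run \<infinity> i \<omega>) (\<omega> i))"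
  show "\<omega> \<in> costs_above d \<infinity> (Suc n) \<union> (\<Union>j\<le>n. slow_run d (t / real (Suc n)) j)"
  proof (cases "\<exists>j\<le>n. \<omega> \<in> slow_run d (t / real (Suc n)) j")
    case False
    then have fast: "?time j \<le> ennreal (t / real (Suc n))"
      if "j \<le> n" "ereal d \<le> ao_bound_from P run \<infinity> j \<omega>" for j
      using that \<omega> by (auto simp: slow_run_def not_less)
    have bound: "ereal d \<le> ao_bound_from P run \<infinity> (Suc j) \<omega>"
      if "j \<le> n" "\<forall>i\<le>j. ?time i \<le> ennreal (t / real (Suc n))" for j
    proof -
      have "ao_finish P run j \<omega> \<le> ennreal t"
        by (rule ao_finish_le_of_fast_runs[where run=run, OF t that])
      then show ?thesis using \<omega> ao_best_le_cost order_trans by blast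
    qed
    have all_fast: "\<forall>i\<le>j. ?time i \<le> ennreal (t / real (Suc n))" if "j \<le> n" for j
      using that
    proof (induction j)
      case 0
      then show ?case using fast[of 0] by simp
    next
      case (Suc j)
      then have "\<forall>i\<le>j. ?time i \<le> ennreal (t / real (Suc n))" by simp
      with fast[OF Suc.prems bound] Suc.prems show ?case by (auto simp: le_Suc_eq)
    qed
    have "ereal d \<le> ao_bound_from P run \<infinity> (Suc j) \<omega>" if "j < Suc n" for j
      using that by (intro bound all_fast) auto
    then show ?thesis using \<omega> by (auto simp: costs_above_def)
  qed blast
qed

lemma measure_best_above_le:
  assumes "prob_complete P \<Omega> run" and "\<And>b. ereal d \<le> b \<Longrightarrow> \<exists>\<tau>. solves_bounded P b \<tau>"
    and "\<And>b. ereal d \<le> b \<Longrightarrow> \<forall>t\<ge>0. not_found_prob P \<Omega> run b t \<le> min 1 (\<alpha> * exp (- \<beta> * t))"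
    and t: "0 \<le> t" and "0 \<le> \<alpha>"
  shows "measure Seeds {\<omega> \<in> space Seeds. ereal d \<le> ao_best P run t \<omega>}
    \<le> measure Seeds (costs_above d \<infinity> (Suc n)) + real (Suc n) * (\<alpha> * exp (- \<beta> * (t / real (Suc n))))"
proof -
  interpret Seeds: prob_space Seeds by (rule prob_space_Seeds)
  let ?s = "t / real (Suc n)"
  have "measure Seeds {\<omega> \<in> space Seeds. ereal d \<le> ao_best P run t \<omega>}
      \<le> measure Seeds (costs_above d \<infinity> (Suc n) \<union> (\<Union>j\<le>n. slow_run d ?s j))"
    by (intro Seeds.finite_measure_mono best_above_subset[OF t]) measurable
  also have "\<dots> \<le> measure Seeds (costs_above d \<infinity> (Suc n)) + measure Seeds (\<Union>j\<le>n. slow_run d ?s j)"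
    by (rule measure_Un_le) measurable
  also have "measure Seeds (\<Union>j\<le>n. slow_run d ?s j) \<le> (\<Sum>j\<le>n. measure Seeds (slow_run d ?s j))"
    by (rule measure_UNION_le) auto
  also have "\<dots> \<le> (\<Sum>j\<le>n. \<alpha> * exp (- \<beta> * ?s))"
    using t by (intro sum_mono measure_slow_run_le assms(1-3,5)) auto
  finally show ?thesis by simp
qed

lemma measure_best_above_tendsto_0:
  assumes "0 \<le> q" "q < 1" "gap_contraction C q" and "C < d"
    and "prob_complete P \<Omega> run" and "\<And>b. ereal d \<le> b \<Longrightarrow> \<exists>\<tau>. solves_bounded P b \<tau>"
    and "0 < \<alpha>" "0 < \<beta>"
    and "\<And>b. ereal d \<le> b \<Longrightarrow> \<forall>t\<ge>0. not_found_prob P \<Omega> run b t \<le> min 1 (\<alpha> * exp (- \<beta> * t))"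
  shows "((\<lambda>t. measure Seeds {\<omega> \<in> space Seeds. ereal d \<le> ao_best P run t \<omega>}) \<longlongrightarrow> 0) at_top"
proof (rule order_tendstoI)
  fix \<eta> :: real assume \<eta>: "0 < \<eta>"
  obtain n where n: "measure Seeds (costs_above d \<infinity> (Suc n)) < \<eta> / 2"
    using costs_above_infinity_small[OF assms(1-4), of "\<eta> / 2"] \<eta> by auto
  have "eventually (\<lambda>t. real (Suc n) * (\<alpha> * exp (- \<beta> * (t / real (Suc n)))) < \<eta> / 2) at_top"
    using tendsto_mult_exp_decay_at_top[of "real (Suc n)" \<beta> \<alpha>] assms(8) \<eta> by (intro order_tendstoD(2)) auto
  with eventually_ge_at_top[of 0]
  show "eventually (\<lambda>t. measure Seeds {\<omega> \<in> space Seeds. ereal d \<le> ao_best P run t \<omega>} < \<eta>) at_top"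
  proof eventually_elim
    case (elim t)
    have "measure Seeds {\<omega> \<in> space Seeds. ereal d \<le> ao_best P run t \<omega>}
        \<le> measure Seeds (costs_above d \<infinity> (Suc n)) + real (Suc n) * (\<alpha> * exp (- \<beta> * (t / real (Suc n))))"
      using assms(7) by (intro measure_best_above_le assms(5,6,9) elim(1)) auto
    with n elim(2) show ?case by linarith
  qed
qed (rule always_eventually, use measure_nonneg less_le_trans in blast)

lemma measure_best_above_optimal_tendsto_0:
  assumes "optimum_attained P" "prob_complete P \<Omega> run" "well_behaved P \<Omega> run" "exp_convergent P \<Omega> run"
    and "0 < \<epsilon>"
  shows "((\<lambda>t. measure Seeds {\<omega> \<in> space Seeds. ereal (optimal_cost P + \<epsilon>) \<le> ao_best P run t \<omega>})
    \<longlongrightarrow> 0) at_top"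
proof -
  let ?C = "optimal_cost P"
  obtain q where q: "0 \<le> q" "q < 1" "gap_contraction ?C q"
    using gap_contraction_if_well_behaved[OF assms(3)] by blast
  from assms(4,5) obtain \<alpha> \<beta> where "0 < \<alpha>" "0 < \<beta>" and decay: "\<forall>b. ereal (?C + \<epsilon>) \<le> b \<longrightarrow>
      (\<forall>t\<ge>0. not_found_prob P \<Omega> run b t \<le> min 1 (\<alpha> * exp (- \<beta> * t)))"
    unfolding exp_convergent_def by blast
  have "\<exists>\<tau>. solves_bounded P b \<tau>" if "ereal (?C + \<epsilon>) \<le> b" for b
  proof (rule ex_solves_bounded_if_optimal_cost_le[OF assms(1)])
    show "ereal ?C \<le> b" using order_trans[OF _ that, of "ereal ?C"] \<open>0 < \<epsilon>\<close> by simp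
  qed
  from measure_best_above_tendsto_0[OF q _ assms(2) this \<open>0 < \<alpha>\<close> \<open>0 < \<beta>\<close>] decay \<open>0 < \<epsilon>\<close>
  show ?thesis by simp
qed

lemma AE_ao_best_tendsto:
  assumes tail: "\<And>\<epsilon>. 0 < \<epsilon> \<Longrightarrow>
      ((\<lambda>t. measure Seeds {\<omega> \<in> space Seeds. ereal (C + \<epsilon>) \<le> ao_best P run t \<omega>}) \<longlongrightarrow> 0) at_top"
    and "\<And>b. AE w in \<Omega>. fst (run b w) < \<infinity> \<longrightarrow> solves_bounded P b (snd (run b w))"
    and "\<And>\<tau>. feasible P \<tau> \<Longrightarrow> C \<le> cost P \<tau>"
  shows "AE \<omega> in Seeds. ((\<lambda>t. ao_best P run t \<omega>) \<longlongrightarrow> ereal C) at_top"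
proof -
  interpret Seeds: prob_space Seeds by (rule prob_space_Seeds)
  have "AE \<omega> in Seeds. \<forall>j. fst (run (ao_bound_from P run \<infinity> j \<omega>) (\<omega> j)) < \<infinity> \<longrightarrow>
      C \<le> cost P (snd (run (ao_bound_from P run \<infinity> j \<omega>) (\<omega> j)))"
    unfolding AE_all_countable by (intro allI AE_terminated_cost_ge[OF assms(2,3)])
  moreover have "AE \<omega> in Seeds. \<forall>k::nat. \<exists>m::nat. ao_best P run (real m) \<omega> < ereal (C + 1 / real (Suc k))"
    unfolding AE_all_countable
  proof
    fix k :: nat
    let ?e = "1 / real (Suc k)"
    let ?B = "\<lambda>m::nat. {\<omega> \<in> space Seeds. ereal (C + ?e) \<le> ao_best P run (real m) \<omega>}"
    let ?never = "{\<omega> \<in> space Seeds. \<forall>m::nat. ereal (C + ?e) \<le> ao_best P run (real m) \<omega>}"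
    have "(\<lambda>m. measure Seeds (?B m)) \<longlonglongrightarrow> 0"
      using filterlim_compose[OF tail filterlim_real_sequentially, of ?e] by simp
    moreover have "measure Seeds ?never \<le> measure Seeds (?B m)" for m
      by (rule Seeds.finite_measure_mono) auto
    ultimately have "measure Seeds ?never \<le> 0"
      by (intro LIMSEQ_le_const) auto
    then have "emeasure Seeds ?never = 0"
      by (simp add: Seeds.emeasure_eq_measure measure_le_0_iff)
    then show "AE \<omega> in Seeds. \<exists>m::nat. ao_best P run (real m) \<omega> < ereal (C + ?e)"
      by (subst AE_iff_measurable[OF _ refl]) (measurable, auto simp: not_less)
  qed
  ultimately show ?thesis
  proof eventually_elim
    case (elim \<omega>)
    show ?case
    proof (rule ao_best_tendsto_of_approx)
      show "ereal C \<le> ao_best P run t \<omega>" for t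
        by (rule ao_best_ge_of_costs_ge) (use elim(1) in blast)
    qed (use elim(2) in blast)
  qed
qed

end

theorem theorem4:
  fixes P :: "('x::real_normed_vector, 'u) kdp"
    and \<Omega> :: "'w measure"
    and run :: "ereal \<Rightarrow> 'w \<Rightarrow> ennreal \<times> ('x, 'u) traj"
  assumes "\<exists>\<tau>. feasible P \<tau>"
    and "optimum_attained P"
    and "randomized_feasible_planner P \<Omega> run"
    and "prob_complete P \<Omega> run"
    and "well_behaved P \<Omega> run"
    and "exp_convergent P \<Omega> run"
  shows "(\<forall>\<epsilon>>0. ((\<lambda>t. measure (PiM UNIV (\<lambda>_::nat. \<Omega>))
              {\<omega> \<in> space (PiM UNIV (\<lambda>_::nat. \<Omega>)).
                 ereal (optimal_cost P + \<epsilon>) \<le> ao_best P run t \<omega>}) \<longlongrightarrow> 0) at_top) \<and>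
         (AE \<omega> in PiM UNIV (\<lambda>_::nat. \<Omega>).
           ((\<lambda>t. ao_best P run t \<omega>) \<longlongrightarrow> ereal (optimal_cost P)) at_top)"
proof -
  have planner: "\<And>b. AE w in \<Omega>. fst (run b w) < \<infinity> \<longrightarrow> solves_bounded P b (snd (run b w))"
    using assms(3) unfolding randomized_feasible_planner_def by blast
  interpret measurable_planner P \<Omega> run
    by (rule measurable_planner.intro) (use assms(3) in \<open>simp_all add: randomized_feasible_planner_def\<close>)
  have tail: "((\<lambda>t. measure Seeds {\<omega> \<in> space Seeds.
      ereal (optimal_cost P + \<epsilon>) \<le> ao_best P run t \<omega>}) \<longlongrightarrow> 0) at_top" if "0 < \<epsilon>" for \<epsilon>
    by (rule measure_best_above_optimal_tendsto_0[OF assms(2,4,5,6) that])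
  moreover have "AE \<omega> in Seeds. ((\<lambda>t. ao_best P run t \<omega>) \<longlongrightarrow> ereal (optimal_cost P)) at_top"
    by (rule AE_ao_best_tendsto[OF tail planner optimal_cost_le_cost[OF assms(2)]])
  ultimately show ?thesis by blast
qed

end
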